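(* Let $N\ge2$, $R>0$, and let $u\in C(B_R,(0,\infty))$ be separable in $B_R$. If $u$ is not radially symmetric with respect to the origin, then there exists $M\in O(N)$ such that: (i) (axial symmetry) for every $\alpha\in(0,R]$ and every $h\in[-\alpha,\alpha]$, $u_M$ is constant on $\{x\in S^{N-1}_\alpha:x_N=h\}$, i.e. $u_M$ is axially symmetric with respect to the $x_N$-axis; (ii) (monotonicity) for every $\alpha\in(0,R]$, the function $\theta\mapsto u_M(0_{N-2},\alpha\cos\theta,\alpha\sin\theta)$ is nonincreasing on $[\pi/2,3\pi/2]$.
   Context: $B_R$ is the closed ball of radius $R$ centered at $0$ in $\mathbb{R}^N$; $S^{N-1}_\alpha$ is the sphere of radius $\alpha$ centered at $0$; $O(N)$ is the orthogonal group and $u_M(x):=u(M^{-1}x)$; $0_k$ is the zero vector of $\mathbb{R}^k$. For an open half-space $H$, $\sigma_H$ is the reflection across $\partial H$. A function $u:B_R\to\mathbb{R}$ is separable in $B_R$ if for every open half-space $H\subset\mathbb{R}^N$ with $0\in\partial H$, either $u(x)\ge u(\sigma_Hx)$ for all $x\in H\cap B_R$, or $u(x)\le u(\sigma_Hx)$ for all $x\in H\cap B_R$. Radially symmetric with respect to the origin means $u(x)=u(y)$ whenever $|x|=|y|$. *)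

theory Defs
  imports "HOL-Analysis.Analysis"
begin

text \<open>Coordinates of R^N are indexed by a finite linearly ordered type 'n;
  the k-th coordinate x_k corresponds to the k-th smallest index.\<close>

definition last_idx :: "'n::{finite,linorder}" where
  "last_idx = Max UNIV"

definition second_last_idx :: "'n::{finite,linorder}" where
  "second_last_idx = Max (UNIV - {last_idx})"

definition refl_hyp :: "real^'n \<Rightarrow> real^'n \<Rightarrow> real^'n" where
  "refl_hyp a x = x - (2 * (a \<bullet> x) / (a \<bullet> a)) *\<^sub>R a"

text \<open>Open half-spaces H with 0 on the boundary are exactly {x. a . x > 0}, a \<noteq> 0.\<close>
definition separable_in :: "real \<Rightarrow> (real^'n \<Rightarrow> real) \<Rightarrow> bool" where
  "separable_in R u \<longleftrightarrow>
     (\<forall>a. a \<noteq> 0 \<longrightarrow>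
        (\<forall>x\<in>cball 0 R. a \<bullet> x > 0 \<longrightarrow> u x \<ge> u (refl_hyp a x)) \<or>
        (\<forall>x\<in>cball 0 R. a \<bullet> x > 0 \<longrightarrow> u x \<le> u (refl_hyp a x)))"

definition radially_symmetric_in :: "real \<Rightarrow> (real^'n \<Rightarrow> real) \<Rightarrow> bool" where
  "radially_symmetric_in R u \<longleftrightarrow>
     (\<forall>x\<in>cball 0 R. \<forall>y\<in>cball 0 R. norm x = norm y \<longrightarrow> u x = u y)"

definition rot_fun :: "real^'n^'n \<Rightarrow> (real^'n \<Rightarrow> real) \<Rightarrow> real^'n \<Rightarrow> real" where
  "rot_fun M u x = u (matrix_inv M *v x)"

definition circ_pt :: "real \<Rightarrow> real \<Rightarrow> real^'n::{finite,linorder}" where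
  "circ_pt a t = (\<chi> i. if i = last_idx then a * sin t
                        else if i = second_last_idx then a * cos t else 0)"

end

(*
  Call a \<noteq> 0 dominating if u (\<sigma>\<^sub>a x) \<le> u x whenever a \<bullet> x > 0, where \<sigma>\<^sub>a is the reflection
  across a\<^sup>\<bottom>. Separability says that a or -a is dominating for every a \<noteq> 0.

  Let p = \<integral> u(x) x dx over the ball. As \<sigma>\<^sub>a preserves the ball and the measure,
  a \<bullet> p = \<integral> u(x) (a \<bullet> x) dx is half of \<integral> (u x - u (\<sigma>\<^sub>a x)) (a \<bullet> x) dx, whose integrand is
  nonnegative when a is dominating. Hence a \<bullet> p \<ge> 0 for every dominating a, strictly if the
  domination is strict somewhere, which non-radiality provides. So p \<noteq> 0 and every a with
  a \<bullet> p > 0 is dominating (otherwise -a would be); by continuity so is every a \<noteq> 0 with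
  a \<bullet> p \<ge> 0. Reflecting x to y across (x - y)\<^sup>\<bottom> then gives u y \<le> u x whenever |x| = |y| and
  p \<bullet> y \<le> p \<bullet> x, and a rotation taking the last coordinate axis to p turns this into axial
  symmetry and monotonicity in the polar angle.
*)

theory Submission
  imports Defs
begin

lemma inner_refl_hyp: "a \<noteq> 0 \<Longrightarrow> a \<bullet> refl_hyp a x = - (a \<bullet> x)"
  unfolding refl_hyp_def by (simp add: inner_diff_right)

lemma refl_hyp_refl_hyp: "a \<noteq> 0 \<Longrightarrow> refl_hyp a (refl_hyp a x) = x"
  using inner_refl_hyp[of a x] by (simp add: refl_hyp_def algebra_simps)

lemma refl_hyp_uminus: "refl_hyp (- a) = refl_hyp a"
  by (simp add: refl_hyp_def fun_eq_iff)

lemma refl_hyp_zero [simp]: "refl_hyp 0 x = x"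
  by (simp add: refl_hyp_def)

lemma refl_hyp_0 [simp]: "refl_hyp a 0 = 0"
  by (simp add: refl_hyp_def)

lemma linear_refl_hyp: "linear (refl_hyp a)"
  unfolding refl_hyp_def
  by (rule linearI) (auto simp: algebra_simps add_divide_distrib)

lemma bounded_linear_refl_hyp: "bounded_linear (refl_hyp a)"
  using linear_refl_hyp linear_conv_bounded_linear by blast

lemma norm_refl_hyp [simp]: "norm (refl_hyp a x) = norm x"
proof (cases "a = 0")
  case False
  then have "(norm (refl_hyp a x))\<^sup>2 = (norm x)\<^sup>2"
    unfolding power2_norm_eq_inner refl_hyp_def
    by (simp add: inner_diff_left inner_diff_right inner_commute[of x a] field_simps power2_eq_square)
  then show ?thesis by simp
qed simp

lemma continuous_on_cball_refl_hyp:
  "continuous_on (cball 0 R) v \<Longrightarrow> continuous_on (cball 0 R) (\<lambda>x. v (refl_hyp a x))"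
  by (rule continuous_on_compose2[OF _ linear_continuous_on[OF bounded_linear_refl_hyp]]) auto

lemma orthogonal_transformation_refl_hyp: "orthogonal_transformation (refl_hyp a)"
  by (simp add: orthogonal_transformation linear_refl_hyp)

lemma refl_hyp_diff:
  assumes "norm x = norm y" "x \<noteq> y"
  shows "refl_hyp (x - y) x = y" and "(x - y) \<bullet> x > 0"
proof -
  have "x \<bullet> x = y \<bullet> y" using assms(1) by (simp add: dot_square_norm)
  then have sq: "(x - y) \<bullet> (x - y) = 2 * ((x - y) \<bullet> x)"
    by (simp add: inner_diff_left inner_diff_right inner_commute)
  moreover have "(x - y) \<bullet> (x - y) > 0" using assms(2) by simp
  ultimately show pos: "(x - y) \<bullet> x > 0" by linarith
  show "refl_hyp (x - y) x = y"
    unfolding refl_hyp_def sq using pos by simp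
qed

definition dominates_refl :: "real \<Rightarrow> (real^'n \<Rightarrow> real) \<Rightarrow> real^'n \<Rightarrow> bool" where
  "dominates_refl R u a \<longleftrightarrow> (\<forall>x\<in>cball 0 R. a \<bullet> x > 0 \<longrightarrow> u (refl_hyp a x) \<le> u x)"

lemma dominates_refl_uminus:
  assumes "a \<noteq> 0"
  shows "dominates_refl R u (- a) \<longleftrightarrow> (\<forall>x\<in>cball 0 R. a \<bullet> x > 0 \<longrightarrow> u x \<le> u (refl_hyp a x))"
proof -
  have "(- a) \<bullet> x > 0 \<longleftrightarrow> a \<bullet> refl_hyp a x > 0" for x
    using inner_refl_hyp[OF assms] by simp
  then show ?thesis
    unfolding dominates_refl_def refl_hyp_uminus
    by (metis mem_cball_0 norm_refl_hyp refl_hyp_refl_hyp[OF assms])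
qed

lemma separable_in_dominates_refl:
  "separable_in R u \<Longrightarrow> a \<noteq> 0 \<Longrightarrow> dominates_refl R u a \<or> dominates_refl R u (- a)"
  unfolding separable_in_def dominates_refl_uminus by (auto simp: dominates_refl_def)

lemma dominates_refl_diff:
  assumes sep: "\<forall>a. a \<noteq> 0 \<longrightarrow> dominates_refl R v a \<or> dominates_refl R v (- a)"
    and y: "y \<in> cball 0 R" and "norm x = norm y" "v y < v x"
  shows "dominates_refl R v (x - y)"
proof -
  have "x \<noteq> y" using \<open>v y < v x\<close> by auto
  then have "refl_hyp (y - x) y = x" "(y - x) \<bullet> y > 0"
    using refl_hyp_diff[of y x] \<open>norm x = norm y\<close> by auto
  then have "\<not> dominates_refl R v (- (x - y))"
    using y \<open>v y < v x\<close> by (auto simp: dominates_refl_def)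
  then show ?thesis
    using sep[rule_format, of "x - y"] \<open>x \<noteq> y\<close> by auto
qed

section \<open>Integrals over the ball\<close>

lemma absolutely_integrable_continuous_compact:
  fixes f :: "'a::euclidean_space \<Rightarrow> 'b::euclidean_space"
  assumes "compact S" "continuous_on S f"
  shows "f absolutely_integrable_on S"
proof -
  have int: "integrable lborel (\<lambda>x. indicator S x *\<^sub>R f x)"
    by (rule borel_integrable_compact[OF assms])
  show ?thesis
    unfolding set_integrable_def
    using int integrable_completion[OF borel_measurable_integrable[OF int]] by simp
qed

lemma integrable_continuous_compact:
  fixes f :: "'a::euclidean_space \<Rightarrow> 'b::euclidean_space"
  shows "compact S \<Longrightarrow> continuous_on S f \<Longrightarrow> f integrable_on S"
  by (rule set_lebesgue_integral_eq_integral(1)[OF absolutely_integrable_continuous_compact])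

lemma integral_pos_continuous_cball:
  fixes f :: "'a::euclidean_space \<Rightarrow> real"
  assumes "R > 0" and f: "continuous_on (cball 0 R) f"
    and nonneg: "\<And>x. x \<in> cball 0 R \<Longrightarrow> 0 \<le> f x" and z: "z \<in> cball 0 R" "f z > 0"
  shows "integral (cball 0 R) f > 0"
proof -
  have int: "f integrable_on cball 0 R"
    by (rule integrable_continuous_compact[OF compact_cball f])
  have "integral (cball 0 R) f \<noteq> 0"
  proof
    assume "integral (cball 0 R) f = 0"
    then have "(f has_integral 0) (closure (ball 0 R))"
      using int \<open>R > 0\<close> by (simp add: has_integral_iff)
    then have "f z = 0"
      using has_integral_0_closure_imp_0[of "ball 0 R" f z] \<open>R > 0\<close> f nonneg z
      by (auto simp: emeasure_ball emeasure_cball unit_ball_vol_pos)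
    with z show False by simp
  qed
  moreover have "integral (cball 0 R) f \<ge> 0"
    by (rule integral_nonneg[OF int nonneg])
  ultimately show ?thesis by simp
qed

lemma integral_refl_hyp_cball:
  fixes f :: "real^'m::{finite,wellorder} \<Rightarrow> real"
  assumes f: "continuous_on (cball 0 R) f"
  shows "integral (cball 0 R) (\<lambda>x. f (refl_hyp a x)) = integral (cball 0 R) f"
proof -
  have img: "refl_hyp a ` cball 0 R = cball 0 R"
    using image_orthogonal_transformation_cball[OF orthogonal_transformation_refl_hyp, of a 0 R]
    by simp
  have det: "\<bar>det (matrix (refl_hyp a))\<bar> = 1"
    using orthogonal_transformation_refl_hyp[of a] det_orthogonal_matrix orthogonal_transformation_matrix
    by fastforce
  txt \<open>The change-of-variables theorem is stated for vector-valued integrands.\<close>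
  have "(\<lambda>x. f x *\<^sub>R (1::real^1)) absolutely_integrable_on refl_hyp a ` cball 0 R"
    unfolding img by (intro absolutely_integrable_continuous_compact compact_cball continuous_intros f)
  from integral_change_of_variables_linear[OF linear_refl_hyp disjI1[OF this]]
  have eq: "integral (cball 0 R) (\<lambda>x. f x *\<^sub>R (1::real^1))
      = integral (cball 0 R) (\<lambda>x. f (refl_hyp a x) *\<^sub>R (1::real^1))"
    using img det by (simp add: o_def)
  have scale: "integral (cball 0 R) (\<lambda>x. g x *\<^sub>R (1::real^1)) = integral (cball 0 R) g *\<^sub>R 1"
    if "continuous_on (cball 0 R) g" for g
    using integrable_continuous_compact[OF compact_cball that]
    by (intro integral_unique has_integral_scaleR_left integrable_integral)
  from continuous_on_cball_refl_hyp[OF f]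
  have "integral (cball 0 R) f *\<^sub>R (1::real^1) = integral (cball 0 R) (\<lambda>x. f (refl_hyp a x)) *\<^sub>R 1"
    using eq scale[OF f] scale by metis
  then show ?thesis
    by (simp add: scaleR_cancel_right)
qed

lemma integral_mult_inner_eq_half:
  fixes v :: "real^'m::{finite,wellorder} \<Rightarrow> real"
  assumes a: "a \<noteq> 0" and v: "continuous_on (cball 0 R) v"
  shows "integral (cball 0 R) (\<lambda>x. v x * (a \<bullet> x))
       = integral (cball 0 R) (\<lambda>x. (v x - v (refl_hyp a x)) * (a \<bullet> x)) / 2"
proof -
  let ?f = "\<lambda>x. v x * (a \<bullet> x)" and ?g = "\<lambda>x. v (refl_hyp a x) * (a \<bullet> x)"
  have f: "continuous_on (cball 0 R) ?f" by (intro continuous_intros v)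
  have g: "continuous_on (cball 0 R) ?g"
    by (intro continuous_intros continuous_on_cball_refl_hyp v)
  have "integral (cball 0 R) ?g = integral (cball 0 R) (\<lambda>x. - ?f (refl_hyp a x))"
    by (simp add: inner_refl_hyp[OF a])
  also have "\<dots> = - integral (cball 0 R) ?f"
    by (simp add: integral_neg integral_refl_hyp_cball[OF f])
  finally have "integral (cball 0 R) ?g = - integral (cball 0 R) ?f" .
  moreover have "integral (cball 0 R) (\<lambda>x. (v x - v (refl_hyp a x)) * (a \<bullet> x))
      = integral (cball 0 R) ?f - integral (cball 0 R) ?g"
    using integral_diff[OF integrable_continuous_compact[OF compact_cball f]
                           integrable_continuous_compact[OF compact_cball g]]
    by (simp add: left_diff_distrib)
  ultimately show ?thesis by simp
qed

lemma dominates_refl_mult_inner_nonneg: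
  assumes "dominates_refl R v a" "a \<noteq> 0" "x \<in> cball 0 R"
  shows "0 \<le> (v x - v (refl_hyp a x)) * (a \<bullet> x)"
proof (cases "a \<bullet> x" "0::real" rule: linorder_cases)
  case less
  then have "a \<bullet> refl_hyp a x > 0"
    using inner_refl_hyp[OF assms(2)] by simp
  then have "v (refl_hyp a (refl_hyp a x)) \<le> v (refl_hyp a x)"
    using assms(1,3) by (simp add: dominates_refl_def)
  then have "v x \<le> v (refl_hyp a x)"
    by (simp add: refl_hyp_refl_hyp[OF assms(2)])
  with less show ?thesis by (simp add: mult_nonpos_nonpos)
next
  case greater
  then show ?thesis using assms by (simp add: dominates_refl_def)
qed simp

lemma dominates_refl_integral_nonneg:
  fixes v :: "real^'m::{finite,wellorder} \<Rightarrow> real"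
  assumes v: "continuous_on (cball 0 R) v" and a: "a \<noteq> 0" and dom: "dominates_refl R v a"
  shows "integral (cball 0 R) (\<lambda>x. v x * (a \<bullet> x)) \<ge> 0"
proof -
  have "continuous_on (cball 0 R) (\<lambda>x. (v x - v (refl_hyp a x)) * (a \<bullet> x))"
    by (intro continuous_intros continuous_on_cball_refl_hyp v)
  then have "integral (cball 0 R) (\<lambda>x. (v x - v (refl_hyp a x)) * (a \<bullet> x)) \<ge> 0"
    by (intro integral_nonneg integrable_continuous_compact compact_cball
              dominates_refl_mult_inner_nonneg[OF dom a])
  then show ?thesis
    by (simp add: integral_mult_inner_eq_half[OF a v])
qed

lemma dominates_refl_integral_pos:
  fixes v :: "real^'m::{finite,wellorder} \<Rightarrow> real"
  assumes "R > 0" and v: "continuous_on (cball 0 R) v" and a: "a \<noteq> 0"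
    and dom: "dominates_refl R v a"
    and z: "z \<in> cball 0 R" "a \<bullet> z > 0" "v (refl_hyp a z) < v z"
  shows "integral (cball 0 R) (\<lambda>x. v x * (a \<bullet> x)) > 0"
proof -
  have "continuous_on (cball 0 R) (\<lambda>x. (v x - v (refl_hyp a x)) * (a \<bullet> x))"
    by (intro continuous_intros continuous_on_cball_refl_hyp v)
  then have "integral (cball 0 R) (\<lambda>x. (v x - v (refl_hyp a x)) * (a \<bullet> x)) > 0"
    using z by (intro integral_pos_continuous_cball[OF \<open>R > 0\<close> _ _ z(1)]
                      dominates_refl_mult_inner_nonneg[OF dom a]) auto
  then show ?thesis
    by (simp add: integral_mult_inner_eq_half[OF a v])
qed

text \<open>The half-space is centred at the barycentre of the weight v.\<close>
lemma exists_dominating_halfspace_wellorder: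
  fixes v :: "real^'m::{finite,wellorder} \<Rightarrow> real"
  assumes "R > 0" and v: "continuous_on (cball 0 R) v"
    and sep: "\<forall>a. a \<noteq> 0 \<longrightarrow> dominates_refl R v a \<or> dominates_refl R v (- a)"
    and xy: "x \<in> cball 0 R" "y \<in> cball 0 R" "norm x = norm y" "v y < v x"
  shows "\<exists>p. p \<noteq> 0 \<and> (\<forall>a. a \<bullet> p > 0 \<longrightarrow> dominates_refl R v a)"
proof -
  define p where "p = integral (cball 0 R) (\<lambda>x. v x *\<^sub>R x)"
  have "(\<lambda>x. v x *\<^sub>R x) integrable_on cball 0 R"
    by (intro integrable_continuous_compact compact_cball continuous_intros v)
  then have p: "a \<bullet> p = integral (cball 0 R) (\<lambda>x. v x * (a \<bullet> x))" for a
    using integral_component_eq[of "\<lambda>x. v x *\<^sub>R x" "cball 0 R" a]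
    by (simp add: p_def inner_commute)
  have "x \<noteq> y" using xy(4) by auto
  then have "(x - y) \<bullet> p > 0"
    unfolding p using refl_hyp_diff[OF xy(3)] xy
    by (intro dominates_refl_integral_pos[OF \<open>R > 0\<close> v] dominates_refl_diff[OF sep]) auto
  moreover have "dominates_refl R v a" if "a \<bullet> p > 0" for a
  proof (rule ccontr)
    assume "\<not> dominates_refl R v a"
    moreover have "a \<noteq> 0" using that by auto
    ultimately have "(- a) \<bullet> p \<ge> 0"
      unfolding p using sep by (intro dominates_refl_integral_nonneg[OF v]) auto
    with that show False by simp
  qed
  ultimately show ?thesis by (metis inner_zero_right order_less_irrefl)
qed

section \<open>Transport to a well-ordered index type\<close>

text \<open>The change-of-variables theorems of the library are stated for well-ordered index types
  only; the integral argument is therefore carried out on a well-ordered copy of the index type.\<close>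

lemma dominates_refl_compose_isometry:
  fixes L :: "real^'m \<Rightarrow> real^'n"
  assumes L: "linear L" "\<And>x y. L x \<bullet> L y = x \<bullet> y" and "surj L"
  shows "dominates_refl R (u \<circ> L) a \<longleftrightarrow> dominates_refl R u (L a)"
proof -
  have norm: "norm (L x) = norm x" for x
    by (simp add: norm_eq_sqrt_inner L(2))
  have refl: "L (refl_hyp a y) = refl_hyp (L a) (L y)" for y
    by (simp add: refl_hyp_def linear_diff[OF L(1)] linear_scale[OF L(1)] L(2))
  show ?thesis
  proof
    assume dom: "dominates_refl R (u \<circ> L) a"
    show "dominates_refl R u (L a)"
      unfolding dominates_refl_def
    proof (intro ballI impI)
      fix x assume "x \<in> cball 0 R" "L a \<bullet> x > 0"
      moreover obtain y where "x = L y" using \<open>surj L\<close> by blast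
      ultimately show "u (refl_hyp (L a) x) \<le> u x"
        using dom by (auto simp: dominates_refl_def L(2) norm refl)
    qed
  next
    assume "dominates_refl R u (L a)"
    then show "dominates_refl R (u \<circ> L) a"
      unfolding dominates_refl_def by (auto simp: L(2) norm refl)
  qed
qed

typedef 'a wellorder_copy = "UNIV :: 'a set" ..

instance wellorder_copy :: (finite) finite
  by standard (metis finite_imageI finite type_definition.Abs_image[OF type_definition_wellorder_copy])

instantiation wellorder_copy :: (linorder) linorder
begin

definition "a < b \<longleftrightarrow> Rep_wellorder_copy a < Rep_wellorder_copy b"
definition "a \<le> b \<longleftrightarrow> Rep_wellorder_copy a \<le> Rep_wellorder_copy b"

instance
  by standard
    (auto simp: less_eq_wellorder_copy_def less_wellorder_copy_def order_less_le
                Rep_wellorder_copy_inject)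

end

instance wellorder_copy :: ("{finite,linorder}") wellorder
proof -
  have "wf {(x :: 'a wellorder_copy, y). x < y}"
    by (auto simp: trancl_def tranclp_less intro!: finite_acyclic_wf acyclicI)
  then show "OFCLASS('a wellorder_copy, wellorder_class)"
    by (rule wf_wellorderI) intro_classes
qed

definition from_copy :: "real^'n wellorder_copy \<Rightarrow> real^'n" where
  "from_copy y = (\<chi> i. y $ Abs_wellorder_copy i)"

lemma linear_from_copy: "linear from_copy"
  by (rule linearI) (simp_all add: from_copy_def vec_eq_iff)

lemma surj_from_copy: "surj from_copy"
  by (rule surjI[of _ "\<lambda>x. \<chi> j. x $ Rep_wellorder_copy j"])
     (simp add: from_copy_def vec_eq_iff Abs_wellorder_copy_inverse)

lemma inner_from_copy: "from_copy a \<bullet> from_copy (b :: real^'n::finite wellorder_copy) = a \<bullet> b"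
proof -
  have "bij (Abs_wellorder_copy :: 'n \<Rightarrow> 'n wellorder_copy)"
    by (metis bij_betw_def type_definition.Abs_image[OF type_definition_wellorder_copy]
              Abs_wellorder_copy_inject UNIV_I inj_on_def)
  from sum.reindex_bij_betw[OF this, of "\<lambda>j. a $ j * b $ j"] show ?thesis
    by (simp add: inner_vec_def from_copy_def)
qed

lemma norm_from_copy [simp]: "norm (from_copy (a :: real^'n::finite wellorder_copy)) = norm a"
  by (simp add: norm_eq_sqrt_inner inner_from_copy)

lemma from_copy_eq_0_iff [simp]: "from_copy (a :: real^'n::finite wellorder_copy) = 0 \<longleftrightarrow> a = 0"
  by (metis norm_eq_zero norm_from_copy)

lemma exists_dominating_halfspace:
  fixes u :: "real^'n::{finite,linorder} \<Rightarrow> real"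
  assumes "R > 0" and u: "continuous_on (cball 0 R) u"
    and "separable_in R u" and "\<not> radially_symmetric_in R u"
  shows "\<exists>p. p \<noteq> 0 \<and> (\<forall>a. a \<bullet> p > 0 \<longrightarrow> dominates_refl R u a)"
proof -
  have sep: "\<forall>a. a \<noteq> 0 \<longrightarrow> dominates_refl R u a \<or> dominates_refl R u (- a)"
    using separable_in_dominates_refl[OF \<open>separable_in R u\<close>] by blast
  have "\<exists>x\<in>cball 0 R. \<exists>y\<in>cball 0 R. norm x = norm y \<and> u y < u x"
    using \<open>\<not> radially_symmetric_in R u\<close> unfolding radially_symmetric_in_def
    by (metis linorder_neqE_linordered_idom)
  then obtain x y where xy: "x \<in> cball 0 R" "y \<in> cball 0 R" "norm x = norm y" "u y < u x"
    by blast
  let ?L = "from_copy :: real^('n::{finite,linorder} wellorder_copy) \<Rightarrow> _"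
  have dom: "dominates_refl R (u \<circ> ?L) a \<longleftrightarrow> dominates_refl R u (?L a)" for a
    by (rule dominates_refl_compose_isometry[OF linear_from_copy inner_from_copy surj_from_copy])
  obtain x' y' where "x = ?L x'" "y = ?L y'"
    using surj_from_copy by (metis surjD)
  moreover have "continuous_on (cball 0 R) (u \<circ> ?L)"
    using linear_from_copy
    by (intro continuous_on_compose linear_continuous_on continuous_on_subset[OF u])
       (auto simp: linear_conv_bounded_linear)
  moreover have "dominates_refl R (u \<circ> ?L) a \<or> dominates_refl R (u \<circ> ?L) (- a)" if "a \<noteq> 0" for a
    using sep[rule_format, of "?L a"] that
    by (simp add: dom linear_neg[OF linear_from_copy])
  ultimately obtain p where p: "p \<noteq> 0" "\<forall>a. a \<bullet> p > 0 \<longrightarrow> dominates_refl R (u \<circ> ?L) a"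
    using exists_dominating_halfspace_wellorder[OF \<open>R > 0\<close>, of "u \<circ> ?L" x' y'] xy by auto
  show ?thesis
  proof (intro exI[of _ "?L p"] conjI allI impI)
    show "?L p \<noteq> 0"
      using p(1) by simp
    fix a assume "a \<bullet> ?L p > 0"
    moreover obtain b where "a = ?L b"
      using surj_from_copy by (metis surjD)
    ultimately show "dominates_refl R u a"
      using p(2) by (simp add: inner_from_copy flip: dom)
  qed
qed

section \<open>Closedness of the dominating directions\<close>

lemma dominates_refl_limit:
  fixes u :: "real^'n::finite \<Rightarrow> real"
  assumes u: "continuous_on (cball 0 R) u"
    and lim: "(A \<longlongrightarrow> a) F" and "F \<noteq> bot" and "a \<noteq> 0"
    and dom: "eventually (\<lambda>t. dominates_refl R u (A t)) F"
  shows "dominates_refl R u a"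
  unfolding dominates_refl_def
proof (intro ballI impI)
  fix x assume x: "x \<in> cball 0 R" "a \<bullet> x > 0"
  have "((\<lambda>t. refl_hyp (A t) x) \<longlongrightarrow> refl_hyp a x) F"
    unfolding refl_hyp_def using \<open>a \<noteq> 0\<close> by (intro tendsto_intros lim) auto
  then have "((\<lambda>t. u (refl_hyp (A t) x)) \<longlongrightarrow> u (refl_hyp a x)) F"
    using x by (intro continuous_on_tendsto_compose[OF u]) auto
  moreover have "((\<lambda>t. A t \<bullet> x) \<longlongrightarrow> a \<bullet> x) F"
    by (intro tendsto_intros lim)
  then have "eventually (\<lambda>t. A t \<bullet> x > 0) F"
    using x(2) by (rule order_tendstoD(1))
  with dom have "eventually (\<lambda>t. u (refl_hyp (A t) x) \<le> u x) F"
    by eventually_elim (use x in \<open>simp add: dominates_refl_def\<close>)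
  ultimately show "u (refl_hyp a x) \<le> u x"
    by (rule tendsto_le[OF \<open>F \<noteq> bot\<close> tendsto_const])
qed

lemma dominates_refl_closed_halfspace:
  fixes u :: "real^'n::finite \<Rightarrow> real"
  assumes u: "continuous_on (cball 0 R) u"
    and p: "\<forall>a. a \<bullet> p > 0 \<longrightarrow> dominates_refl R u a"
    and "p \<noteq> 0" "a \<noteq> 0" "a \<bullet> p \<ge> 0"
  shows "dominates_refl R u a"
proof (rule dominates_refl_limit[OF u _ _ \<open>a \<noteq> 0\<close>])
  show "((\<lambda>t. a + t *\<^sub>R p) \<longlongrightarrow> a) (at_right 0)"
    by (auto intro!: tendsto_eq_intros)
  show "eventually (\<lambda>t. dominates_refl R u (a + t *\<^sub>R p)) (at_right (0::real))"
    using eventually_at_right_less[of 0]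
  proof eventually_elim
    case (elim t)
    then have "(a + t *\<^sub>R p) \<bullet> p > 0"
      using \<open>p \<noteq> 0\<close> \<open>a \<bullet> p \<ge> 0\<close> by (simp add: inner_add_left add_nonneg_pos)
    then show ?case using p by blast
  qed
qed simp

lemma dominating_halfspace_mono:
  fixes u :: "real^'n::finite \<Rightarrow> real"
  assumes u: "continuous_on (cball 0 R) u"
    and p: "\<forall>a. a \<bullet> p > 0 \<longrightarrow> dominates_refl R u a" "p \<noteq> 0"
    and x: "x \<in> cball 0 R" and "norm x = norm y" and "p \<bullet> y \<le> p \<bullet> x"
  shows "u y \<le> u x"
proof (cases "x = y")
  case False
  have "dominates_refl R u (x - y)"
    using False \<open>p \<bullet> y \<le> p \<bullet> x\<close>
    by (intro dominates_refl_closed_halfspace[OF u p]) (auto simp: inner_commute[of _ p] inner_diff_right)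
  then show ?thesis
    using refl_hyp_diff[OF \<open>norm x = norm y\<close> False] x by (auto simp: dominates_refl_def)
qed simp

section \<open>Rotating the half-space to a coordinate half-space\<close>

lemma matrix_inv_orthogonal_matrix:
  assumes "orthogonal_matrix M"
  shows "matrix_inv M = transpose M"
  unfolding matrix_inv_def
proof (rule someI2[where a = "transpose M"])
  show "M ** transpose M = mat 1 \<and> transpose M ** M = mat 1"
    using assms by (simp add: orthogonal_matrix_def)
  fix B assume "M ** B = mat 1 \<and> B ** M = mat 1"
  then have "transpose M ** (M ** B) = transpose M"
    by (simp add: matrix_mul_rid)
  then show "B = transpose M"
    using assms by (simp add: matrix_mul_assoc orthogonal_matrix_def matrix_mul_lid)
qed

lemma rot_fun_transpose_matrix:
  assumes "orthogonal_transformation f"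
  shows "rot_fun (transpose (matrix f)) u = u \<circ> f"
proof -
  have "orthogonal_matrix (matrix f)"
    using assms orthogonal_transformation_matrix by blast
  then have "matrix_inv (transpose (matrix f)) = matrix f"
    by (simp add: matrix_inv_orthogonal_matrix orthogonal_matrix_transpose)
  then show ?thesis
    using assms by (simp add: rot_fun_def fun_eq_iff orthogonal_transformation_linear matrix_works)
qed

lemma exists_orthogonal_transformation_inner_axis:
  fixes p :: "real^'n" and k :: 'n
  assumes "p \<noteq> 0"
  obtains f where "orthogonal_transformation f" "\<And>x. p \<bullet> f x = norm p * x $ k"
proof -
  have "norm (axis k (1::real)) = norm (p /\<^sub>R norm p)"
    using assms by simp
  then obtain f where f: "orthogonal_transformation f" "f (axis k (1::real)) = p /\<^sub>R norm p"
    using orthogonal_transformation_exists by metis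
  have "p \<bullet> f x = norm p * x $ k" for x
  proof -
    have "p = norm p *\<^sub>R f (axis k 1)"
      using assms by (simp add: f(2))
    then have "p \<bullet> f x = norm p * (f (axis k 1) \<bullet> f x)"
      by (metis inner_scaleR_left)
    also have "f (axis k 1) \<bullet> f x = axis k 1 \<bullet> x"
      using f(1) by (simp add: orthogonal_transformation_def)
    finally show ?thesis by (simp add: inner_axis')
  qed
  with f(1) show ?thesis by (rule that)
qed

lemma exists_rotation_mono_coordinate:
  fixes u :: "real^'n::{finite,linorder} \<Rightarrow> real"
  assumes "R > 0" and u: "continuous_on (cball 0 R) u"
    and "separable_in R u" and "\<not> radially_symmetric_in R u"
  shows "\<exists>M. orthogonal_matrix M \<and>
           (\<forall>x y. norm x = norm y \<and> norm x \<le> R \<and> y $ k \<le> x $ k \<longrightarrow> rot_fun M u y \<le> rot_fun M u x)"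
proof -
  obtain p where p: "p \<noteq> 0" "\<forall>a. a \<bullet> p > 0 \<longrightarrow> dominates_refl R u a"
    using exists_dominating_halfspace[OF assms] by blast
  obtain f where f: "orthogonal_transformation f" and inner_p: "\<And>x. p \<bullet> f x = norm p * x $ k"
    using exists_orthogonal_transformation_inner_axis[OF p(1)] by blast
  have mono: "u (f y) \<le> u (f x)" if "norm x = norm y" "norm x \<le> R" "y $ k \<le> x $ k" for x y
  proof (rule dominating_halfspace_mono[OF u p(2,1)])
    show "f x \<in> cball 0 R" "norm (f x) = norm (f y)"
      using that f(1) by (simp_all add: orthogonal_transformation_norm)
    show "p \<bullet> f y \<le> p \<bullet> f x"
      unfolding inner_p using that(3) by (simp add: mult_left_mono)
  qed
  show ?thesis
  proof (intro exI conjI allI impI)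
    show "orthogonal_matrix (transpose (matrix f))"
      using f(1) orthogonal_transformation_matrix orthogonal_matrix_transpose by blast
    fix x y :: "real^'n::{finite,linorder}"
    assume "norm x = norm y \<and> norm x \<le> R \<and> y $ k \<le> x $ k"
    then show "rot_fun (transpose (matrix f)) u y \<le> rot_fun (transpose (matrix f)) u x"
      using mono by (simp add: rot_fun_transpose_matrix[OF f(1)])
  qed
qed

lemma last_idx_ne_second_last_idx:
  assumes "CARD('n::{finite,linorder}) \<ge> 2"
  shows "(last_idx :: 'n) \<noteq> second_last_idx"
proof -
  have "\<not> UNIV \<subseteq> {last_idx :: 'n}"
  proof
    assume "UNIV \<subseteq> {last_idx :: 'n}"
    then have "CARD('n) \<le> card {last_idx :: 'n}"
      by (intro card_mono) auto
    with assms show False by simp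
  qed
  then have "UNIV - {last_idx :: 'n} \<noteq> {}" by blast
  then have "second_last_idx \<in> UNIV - {last_idx :: 'n}"
    unfolding second_last_idx_def by (intro Max_in) auto
  then show ?thesis by auto
qed

lemma circ_pt_last_idx [simp]: "circ_pt a t $ last_idx = a * sin t"
  by (simp add: circ_pt_def)

lemma norm_circ_pt:
  assumes "(last_idx :: 'n::{finite,linorder}) \<noteq> second_last_idx" "a \<ge> 0"
  shows "norm (circ_pt a t :: real^'n::{finite,linorder}) = a"
proof -
  have "(circ_pt a t :: real^'n::{finite,linorder})
      = (a * sin t) *\<^sub>R axis last_idx 1 + (a * cos t) *\<^sub>R axis second_last_idx 1"
    using assms(1) by (auto simp: circ_pt_def vec_eq_iff axis_def)
  then have "(circ_pt a t :: real^'n::{finite,linorder}) \<bullet> circ_pt a t = (a * sin t)\<^sup>2 + (a * cos t)\<^sup>2"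
    using assms(1) by (simp add: inner_add_left inner_add_right inner_axis_axis power2_eq_square)
  also have "\<dots> = a\<^sup>2"
    by (simp add: power_mult_distrib flip: distrib_left)
  finally show ?thesis
    using assms(2) by (simp add: norm_eq_sqrt_inner)
qed

lemma sin_antimono_half_pi_three_half_pi:
  assumes "pi/2 \<le> s" "s \<le> t" "t \<le> 3*pi/2"
  shows "sin t \<le> sin s"
proof -
  have "cos (t - pi/2) \<le> cos (s - pi/2)"
    by (rule cos_monotone_0_pi_le) (use assms in auto)
  then show ?thesis by (simp add: cos_diff)
qed

theorem theorem2p1:
  fixes u :: "real^'n::{finite,linorder} \<Rightarrow> real" and R :: real
  assumes "CARD('n) \<ge> 2"
    and "R > 0"
    and "continuous_on (cball 0 R) u"
    and "\<forall>x\<in>cball 0 R. u x > 0"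
    and "separable_in R u"
    and "\<not> radially_symmetric_in R u"
  shows "\<exists>M :: real^'n::{finite,linorder}^'n::{finite,linorder}. orthogonal_matrix M \<and>
     (\<forall>\<alpha>\<in>{0<..R}. \<forall>h\<in>{-\<alpha>..\<alpha>}. \<forall>x y.
        norm x = \<alpha> \<and> norm y = \<alpha> \<and> x $ last_idx = h \<and> y $ last_idx = h
        \<longrightarrow> rot_fun M u x = rot_fun M u y) \<and>
     (\<forall>\<alpha>\<in>{0<..R}. \<forall>s t. pi/2 \<le> s \<and> s \<le> t \<and> t \<le> 3*pi/2
        \<longrightarrow> rot_fun M u (circ_pt \<alpha> t) \<le> rot_fun M u (circ_pt \<alpha> s))"
proof -
  obtain M where M: "orthogonal_matrix M"
    and mono: "\<And>x y. norm x = norm y \<Longrightarrow> norm x \<le> R \<Longrightarrow> y $ last_idx \<le> x $ last_idx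
                 \<Longrightarrow> rot_fun M u y \<le> rot_fun M u x"
    using exists_rotation_mono_coordinate[OF assms(2,3,5,6), where k = last_idx] by blast
  have circ: "norm (circ_pt \<alpha> t :: real^'n::{finite,linorder}) = \<alpha>" if "\<alpha> > 0" for \<alpha> t
    using norm_circ_pt[OF last_idx_ne_second_last_idx[OF assms(1)]] that by simp
  show ?thesis
  proof (intro exI[of _ M] conjI ballI allI impI)
    fix \<alpha> h and x y :: "real^'n::{finite,linorder}"
    assume "\<alpha> \<in> {0<..R}" "norm x = \<alpha> \<and> norm y = \<alpha> \<and> x $ last_idx = h \<and> y $ last_idx = h"
    then have "norm x = norm y" "norm x \<le> R" "x $ last_idx = y $ last_idx"
      by auto
    then show "rot_fun M u x = rot_fun M u y"
      using mono[of x y] mono[of y x] by (simp add: order_antisym)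
  next
    fix \<alpha> s t :: real
    assume \<alpha>: "\<alpha> \<in> {0<..R}" and st: "pi/2 \<le> s \<and> s \<le> t \<and> t \<le> 3*pi/2"
    have "\<alpha> * sin t \<le> \<alpha> * sin s"
      using \<alpha> st sin_antimono_half_pi_three_half_pi by (simp add: mult_left_mono)
    then show "rot_fun M u (circ_pt \<alpha> t) \<le> rot_fun M u (circ_pt \<alpha> s)"
      using \<alpha> by (intro mono) (simp_all add: circ)
  qed (rule M)
qed

end
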